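(* Let $\alpha\in(0,0.3738)$ and let $c^{(\alpha)}_{i,k}$ be the L1-2 coefficients defined in the context. Then, for sufficiently small temporal stepsize $\tau$, $$c^{(\alpha)}_{k,k}>c^{(\alpha)}_{k-1,k}>\cdots>c^{(\alpha)}_{i,k}>c^{(\alpha)}_{i-1,k}>\cdots>c^{(\alpha)}_{1,k}>0\qquad\text{for all }k\ge 2 .$$
   Context: Let $\tilde a>0$, $T>\tilde a$, $N\in\mathbb{Z}^+$, $\tau=(T-\tilde a)/N$, $t_k=\tilde a+k\tau$ ($k=0,\dots,N$). Define $a^{(\alpha)}_{i,k}=\big(\log\frac{t_k}{t_{i-1}}\big)^{1-\alpha}-\big(\log\frac{t_k}{t_i}\big)^{1-\alpha}$ and, for $i\ge2$, $$b^{(\alpha)}_{i,k}=\frac{1}{\log\frac{t_i}{t_{i-2}}}\Big\{\log\tfrac{t_i}{t_{i-1}}\Big[\Big(\log\tfrac{t_k}{t_i}\Big)^{1-\alpha}+\Big(\log\tfrac{t_k}{t_{i-1}}\Big)^{1-\alpha}\Big]+\tfrac{2}{2-\alpha}\Big[\Big(\log\tfrac{t_k}{t_i}\Big)^{2-\alpha}-\Big(\log\tfrac{t_k}{t_{i-1}}\Big)^{2-\alpha}\Big]\Big\}.$$ The coefficients are: $c^{(\alpha)}_{1,1}=\frac{a^{(\alpha)}_{1,1}}{\Gamma(2-\alpha)\log\frac{t_1}{t_0}}$; for $k=2$: $c^{(\alpha)}_{1,2}=\frac{a^{(\alpha)}_{1,2}+b^{(\alpha)}_{2,2}}{\Gamma(2-\alpha)\log\frac{t_1}{t_0}}$,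 $c^{(\alpha)}_{2,2}=\frac{a^{(\alpha)}_{2,2}-b^{(\alpha)}_{2,2}}{\Gamma(2-\alpha)\log\frac{t_2}{t_1}}$; for $k\ge3$: $c^{(\alpha)}_{1,k}=\frac{a^{(\alpha)}_{1,k}+b^{(\alpha)}_{2,k}}{\Gamma(2-\alpha)\log\frac{t_1}{t_0}}$, $c^{(\alpha)}_{i,k}=\frac{a^{(\alpha)}_{i,k}-b^{(\alpha)}_{i,k}+b^{(\alpha)}_{i+1,k}}{\Gamma(2-\alpha)\log\frac{t_i}{t_{i-1}}}$ for $2\le i\le k-1$, and $c^{(\alpha)}_{k,k}=\frac{a^{(\alpha)}_{k,k}-b^{(\alpha)}_{k,k}}{\Gamma(2-\alpha)\log\frac{t_k}{t_{k-1}}}$. *)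

theory Defs
  imports "HOL-Analysis.Analysis"
begin

definition grid :: "real \<Rightarrow> real \<Rightarrow> nat \<Rightarrow> nat \<Rightarrow> real" where
  "grid a T N k = a + real k * ((T - a) / real N)"

definition acoef :: "real \<Rightarrow> (nat \<Rightarrow> real) \<Rightarrow> nat \<Rightarrow> nat \<Rightarrow> real" where
  "acoef \<alpha> t i k = (ln (t k / t (i - 1))) powr (1 - \<alpha>) - (ln (t k / t i)) powr (1 - \<alpha>)"

definition bcoef :: "real \<Rightarrow> (nat \<Rightarrow> real) \<Rightarrow> nat \<Rightarrow> nat \<Rightarrow> real" where
  "bcoef \<alpha> t i k = (1 / ln (t i / t (i - 2))) *
     (ln (t i / t (i - 1)) * ((ln (t k / t i)) powr (1 - \<alpha>) + (ln (t k / t (i - 1))) powr (1 - \<alpha>))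
      + (2 / (2 - \<alpha>)) * ((ln (t k / t i)) powr (2 - \<alpha>) - (ln (t k / t (i - 1))) powr (2 - \<alpha>)))"

definition ccoef :: "real \<Rightarrow> (nat \<Rightarrow> real) \<Rightarrow> nat \<Rightarrow> nat \<Rightarrow> real" where
  "ccoef \<alpha> t i k =
    (if k = 1 then acoef \<alpha> t 1 1
     else if i = 1 then acoef \<alpha> t 1 k + bcoef \<alpha> t 2 k
     else if i = k then acoef \<alpha> t k k - bcoef \<alpha> t k k
     else acoef \<alpha> t i k - bcoef \<alpha> t i k + bcoef \<alpha> t (i + 1) k)
    / (Gamma (2 - \<alpha>) * ln (t i / t (i - 1)))"

end

(*
  In the variables v_j = ln (t_k / t_j) and b = 1 - alpha, the a-terms of the L1-2 coefficients
  are differences of s^b and the b-terms are trapezoidal-rule defects of s^b divided by two-step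
  widths.  For a uniform mesh with 60 tau <= a the log-steps v_j - v_(j+1) decrease and vary by at
  most a factor 21/20 over two steps, so second-order Taylor bounds for the concave power s^b give
  c_(i-1,k) <= b v_(i-1)^(b-1) < c_(i,k) whenever i + 2 <= k, as well as c_(1,k) > 0 for k >= 3.

  The remaining comparisons involve only the last four nodes.  Divided by the last log-step, these
  nodes tend to 4, 3, 2, 1, 0 as tau / t_(k-1) -> 0, where the comparisons become explicit
  inequalities between 2^b and 3^b.  The tightest one, (3b + 15) 2^b - (b + 7) 3^b - 3b - 9 > 0,
  holds exactly for b > 0.62613..., which is the origin of the bound alpha < 0.3738.  It is proved
  by concavity from its value at b = 67/107, certified by rational bounds on 2^(67/107) and
  3^(67/107) obtained by repeated squaring.
*)

theory Submission
  imports Defs "HOL-Real_Asymp.Real_Asymp"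
begin

section \<open>The coefficients in logarithmic variables\<close>

definition acoef_v :: "real \<Rightarrow> (nat \<Rightarrow> real) \<Rightarrow> nat \<Rightarrow> real" where
  "acoef_v b v i = v (i - 1) powr b - v i powr b"

text \<open>The first term is the integral of \<open>2 s\<^sup>b\<close> over \<open>[x, y]\<close>, so this is twice the error
  of the trapezoidal rule for the concave function \<open>s\<^sup>b\<close>.\<close>

definition trapezoid_defect :: "real \<Rightarrow> real \<Rightarrow> real \<Rightarrow> real" where
  "trapezoid_defect b x y =
     2 / (b + 1) * (y powr (b + 1) - x powr (b + 1)) - (y - x) * (x powr b + y powr b)"

definition bcoef_v :: "real \<Rightarrow> (nat \<Rightarrow> real) \<Rightarrow> nat \<Rightarrow> real" where
  "bcoef_v b v i = - trapezoid_defect b (v i) (v (i - 1)) / (v (i - 2) - v i)"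

definition ccoef_num :: "real \<Rightarrow> (nat \<Rightarrow> real) \<Rightarrow> nat \<Rightarrow> nat \<Rightarrow> real" where
  "ccoef_num b v i k =
    (if k = 1 then acoef_v b v 1
     else if i = 1 then acoef_v b v 1 + bcoef_v b v 2
     else if i = k then acoef_v b v k - bcoef_v b v k
     else acoef_v b v i - bcoef_v b v i + bcoef_v b v (i + 1))"

definition ccoef_v :: "real \<Rightarrow> (nat \<Rightarrow> real) \<Rightarrow> nat \<Rightarrow> nat \<Rightarrow> real" where
  "ccoef_v b v i k = ccoef_num b v i k / (v (i - 1) - v i)"

lemma ccoef_eq_ccoef_v:
  assumes t: "\<And>j. 0 < t j"
  shows "ccoef \<alpha> t i k = ccoef_v (1 - \<alpha>) (\<lambda>j. ln (t k / t j)) i k / Gamma (2 - \<alpha>)"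
proof -
  define v where "v = (\<lambda>j. ln (t k / t j))"
  have ln_quot: "ln (t x / t y) = v y - v x" for x y
    using t[of x] t[of y] t[of k] by (simp add: v_def ln_div)
  have v_k: "v k = 0"
    by (simp add: v_def)
  have a: "acoef \<alpha> t j k = acoef_v (1 - \<alpha>) v j" for j
    by (simp add: acoef_def acoef_v_def v_def)
  have b: "bcoef \<alpha> t j k = bcoef_v (1 - \<alpha>) v j" for j
  proof -
    have e: "1 - \<alpha> + 1 = 2 - \<alpha>"
      by simp
    have alg: "1 / D * (h * S + c * (Z - W)) = - (c * (W - Z) - h * S) / D" for D h S c Z W :: real
      by (simp add: field_simps)
    show ?thesis
      unfolding bcoef_def bcoef_v_def trapezoid_defect_def ln_quot v_k diff_zero e
      by (rule alg)
  qed
  have "ccoef \<alpha> t i k = ccoef_v (1 - \<alpha>) v i k / Gamma (2 - \<alpha>)"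
  proof (cases "k = 1")
    case True
    with a[of 1] show ?thesis
      unfolding ccoef_def ccoef_v_def ccoef_num_def ln_quot by simp
  next
    case False
    then show ?thesis
      unfolding ccoef_def ccoef_v_def ccoef_num_def a b ln_quot by simp
  qed
  then show ?thesis
    unfolding v_def .
qed

lemma trapezoid_defect_scale:
  assumes "0 < c" "0 \<le> x" "0 \<le> y"
  shows "trapezoid_defect b (c * x) (c * y) = c powr (b + 1) * trapezoid_defect b x y"
proof -
  have "c powr (b + 1) = c * c powr b"
    using assms(1) by (simp add: powr_add)
  then show ?thesis
    using assms by (simp add: trapezoid_defect_def powr_mult algebra_simps)
qed

lemma ccoef_num_scale:
  assumes c: "0 < c" and v: "\<And>j. j \<le> k \<Longrightarrow> 0 \<le> v j" and i: "1 \<le> i" "i \<le> k"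
  shows "ccoef_num b (\<lambda>j. c * v j) i k = c powr b * ccoef_num b v i k"
proof -
  have c_powr: "c powr (b + 1) = c * c powr b"
    using c powr_mult_base[of c b] by (simp add: add.commute)
  have a: "acoef_v b (\<lambda>j. c * v j) j = c powr b * acoef_v b v j" if "j \<le> k" for j
    using c v[of j] v[of "j - 1"] that by (simp add: acoef_v_def powr_mult right_diff_distrib)
  have b: "bcoef_v b (\<lambda>j. c * v j) j = c powr b * bcoef_v b v j" if "j \<le> k" for j
    using c v[of j] v[of "j - 1"] that
    by (simp add: bcoef_v_def trapezoid_defect_scale c_powr flip: right_diff_distrib)
  have "k \<noteq> 1 \<Longrightarrow> 2 \<le> k" "i \<noteq> k \<Longrightarrow> i + 1 \<le> k"
    using i by auto
  then show ?thesis
    using i unfolding ccoef_num_def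
    by (cases "k = 1"; cases "i = 1"; cases "i = k") (simp_all add: a b right_diff_distrib distrib_left)
qed

lemma ccoef_v_scale:
  assumes c: "0 < c" and "\<And>j. j \<le> k \<Longrightarrow> 0 \<le> v j" "1 \<le> i" "i \<le> k"
  shows "ccoef_v b (\<lambda>j. c * v j) i k = c powr (b - 1) * ccoef_v b v i k"
proof -
  have "c powr b = c * c powr (b - 1)"
    using c powr_mult_base[of c "b - 1"] by simp
  then show ?thesis
    using assms by (simp add: ccoef_v_def ccoef_num_scale flip: right_diff_distrib)
qed

lemma ccoef_v_cong:
  assumes "\<And>j. j \<le> k \<Longrightarrow> v j = w j" "1 \<le> i" "i \<le> k"
  shows "ccoef_v b v i k = ccoef_v b w i k"
  using assms by (auto simp: ccoef_v_def ccoef_num_def acoef_v_def bcoef_v_def)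

lemma ccoef_v_shift:
  assumes "2 \<le> i" "i \<le> k"
  shows "ccoef_v b v (i + d) (k + d) = ccoef_v b (\<lambda>j. v (j + d)) i k"
proof -
  obtain i' k' where "i = i' + 2" "k = k' + 2"
    using assms le_Suc_ex[of 2 i] le_Suc_ex[of 2 k] by (auto simp: add.commute)
  then show ?thesis
    by (simp add: ccoef_v_def ccoef_num_def acoef_v_def bcoef_v_def)
qed

lemma ccoef_num_interior:
  assumes "1 \<le> i" "i < k"
  shows "ccoef_num b v i k =
    acoef_v b v i - (if i = 1 then 0 else bcoef_v b v i) + bcoef_v b v (i + 1)"
  using assms by (simp add: ccoef_num_def numeral_2_eq_2)

section \<open>Taylor bounds for concave powers\<close>

lemma strongly_concave_taylor_bounds:
  fixes g g' g'' :: "real \<Rightarrow> real"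
  assumes xy: "x \<le> y"
    and g': "\<And>s. s \<in> {x..y} \<Longrightarrow> (g has_real_derivative g' s) (at s)"
    and g'': "\<And>s. s \<in> {x..y} \<Longrightarrow> (g' has_real_derivative g'' s) (at s)"
    and curvature: "\<And>s. s \<in> {x..y} \<Longrightarrow> g'' s \<le> - m"
  shows "(y - x) * g' y + m * (y - x)\<^sup>2 / 2 \<le> g y - g x"
    and "g y - g x \<le> (y - x) * g' x - m * (y - x)\<^sup>2 / 2"
proof -
  have convex: "0 \<le> - g'' s - m" if "s \<in> {x..y}" for s
    using curvature[OF that] by simp
  define F where "F c s = - g s - m * (s - c)\<^sup>2 / 2" for c s
  define F' where "F' c s = - g' s - m * (s - c)" for c s
  have derivs: "(F c has_real_derivative F' c s) (at s)" "(F' c has_real_derivative - g'' s - m) (at s)"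
    if "s \<in> {x..y}" for c s
    unfolding F_def F'_def using g'[OF that] g''[OF that]
    by (auto intro!: derivative_eq_intros simp: power2_eq_square)
  have "F' y y * (x - y) \<le> F y x - F y y"
    by (rule f''_imp_f'[OF convex_real_interval(5) derivs convex]) (use xy in auto)
  then show "(y - x) * g' y + m * (y - x)\<^sup>2 / 2 \<le> g y - g x"
    by (simp add: F_def F'_def power2_commute algebra_simps)
  have "F' x x * (y - x) \<le> F x y - F x x"
    by (rule f''_imp_f'[OF convex_real_interval(5) derivs convex]) (use xy in auto)
  then show "g y - g x \<le> (y - x) * g' x - m * (y - x)\<^sup>2 / 2"
    by (simp add: F_def F'_def algebra_simps)
qed

lemma powr_diff_bounds:
  fixes b x y :: real
  assumes b: "0 < b" "b < 1" and xy: "0 < x" "x < y"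
  shows "(y - x) * (b * y powr (b - 1)) + b * (1 - b) * y powr (b - 2) * (y - x)\<^sup>2 / 2
           \<le> y powr b - x powr b"
    and "y powr b - x powr b
           \<le> (y - x) * (b * x powr (b - 1)) - b * (1 - b) * y powr (b - 2) * (y - x)\<^sup>2 / 2"
proof -
  have derivs: "((\<lambda>s. s powr b) has_real_derivative b * s powr (b - 1)) (at s)"
    "((\<lambda>s. b * s powr (b - 1)) has_real_derivative b * ((b - 1) * s powr (b - 2))) (at s)"
    if "s \<in> {x..y}" for s
    using that xy by (auto intro!: derivative_eq_intros simp: diff_diff_add)
  have "b * ((b - 1) * s powr (b - 2)) \<le> - (b * (1 - b) * y powr (b - 2))" if "s \<in> {x..y}" for s
  proof -
    have "y powr (b - 2) \<le> s powr (b - 2)"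
      using that xy b by (intro powr_mono2') auto
    then have "b * (1 - b) * y powr (b - 2) \<le> b * (1 - b) * s powr (b - 2)"
      using b by (intro mult_left_mono) auto
    moreover have "b * ((b - 1) * s powr (b - 2)) = - (b * (1 - b) * s powr (b - 2))"
      by (simp add: algebra_simps)
    ultimately show ?thesis
      by linarith
  qed
  note taylor = strongly_concave_taylor_bounds[OF _ derivs this]
  show "(y - x) * (b * y powr (b - 1)) + b * (1 - b) * y powr (b - 2) * (y - x)\<^sup>2 / 2
      \<le> y powr b - x powr b"
    using taylor(1) xy by simp
  show "y powr b - x powr b
      \<le> (y - x) * (b * x powr (b - 1)) - b * (1 - b) * y powr (b - 2) * (y - x)\<^sup>2 / 2"
    using taylor(2) xy by simp
qed

lemma trapezoid_defect_derivatives: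
  fixes b x s :: real
  assumes b: "0 < b" and s: "0 < s"
  shows "((\<lambda>s. trapezoid_defect b x s) has_real_derivative
           s powr b - x powr b - (s - x) * (b * s powr (b - 1))) (at s)"
    and "((\<lambda>s. s powr b - x powr b - (s - x) * (b * s powr (b - 1))) has_real_derivative
           (s - x) * (b * (1 - b) * s powr (b - 2))) (at s)"
proof -
  define G where "G s = 2 / (b + 1) * s powr (b + 1)" for s
  have "(G has_real_derivative 2 / (b + 1) * ((b + 1) * s powr (b + 1 - 1))) (at s)"
    unfolding G_def by (intro DERIV_cmult has_real_derivative_powr s)
  then have dG: "(G has_real_derivative 2 * s powr b) (at s)"
    using b by simp
  have "(\<lambda>s. trapezoid_defect b x s) = (\<lambda>s. G s - G x - (s - x) * (x powr b + s powr b))"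
    by (simp add: fun_eq_iff trapezoid_defect_def G_def right_diff_distrib)
  moreover have "s powr (b - 1) = s powr b / s"
    using s by (simp add: powr_diff)
  ultimately show "((\<lambda>s. trapezoid_defect b x s) has_real_derivative
      s powr b - x powr b - (s - x) * (b * s powr (b - 1))) (at s)"
    using s by (auto intro!: derivative_eq_intros dG simp: field_simps)
  have "s powr (b - 1 - 1) = s powr (b - 2)"
    by (simp add: diff_diff_add)
  then show "((\<lambda>s. s powr b - x powr b - (s - x) * (b * s powr (b - 1))) has_real_derivative
      (s - x) * (b * (1 - b) * s powr (b - 2))) (at s)"
    using s by (auto intro!: derivative_eq_intros simp: algebra_simps)
qed

lemma trapezoid_defect_bounds:
  fixes b x y :: real
  assumes b: "0 < b" "b < 1" and xy: "0 < x" "x < y"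
  shows "0 \<le> trapezoid_defect b x y"
    and "trapezoid_defect b x y \<le> b * (1 - b) * x powr (b - 2) * (y - x) ^ 3 / 6"
proof -
  define \<phi> where "\<phi> s = trapezoid_defect b x s" for s
  define \<phi>' where "\<phi>' s = s powr b - x powr b - (s - x) * (b * s powr (b - 1))" for s
  have derivs: "(\<phi> has_real_derivative \<phi>' s) (at s)"
    "(\<phi>' has_real_derivative (s - x) * (b * (1 - b) * s powr (b - 2))) (at s)" if "s \<in> {x..y}" for s
    using trapezoid_defect_derivatives[OF b(1), of s x] that xy
    by (simp_all add: \<phi>_def[abs_def] \<phi>'_def[abs_def])
  have "\<phi>' x * (y - x) \<le> \<phi> y - \<phi> x"
    by (rule f''_imp_f'[OF convex_real_interval(5) derivs]) (use b xy in auto)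
  then show "0 \<le> trapezoid_defect b x y"
    by (simp add: \<phi>_def \<phi>'_def trapezoid_defect_def)
  define g where "g = b * (1 - b) * x powr (b - 2)"
  define F where "F s = g * (s - x) ^ 3 / 6 - \<phi> s" for s
  define F' where "F' s = g * (s - x)\<^sup>2 / 2 - \<phi>' s" for s
  have "F' x * (y - x) \<le> F y - F x"
  proof (rule f''_imp_f'[OF convex_real_interval(5)])
    show "(F has_real_derivative F' s) (at s)"
      "(F' has_real_derivative g * (s - x) - (s - x) * (b * (1 - b) * s powr (b - 2))) (at s)"
      if "s \<in> {x..y}" for s
      unfolding F_def F'_def using derivs[OF that]
      by (auto intro!: derivative_eq_intros simp: power2_eq_square power3_eq_cube field_simps)
    show "0 \<le> g * (s - x) - (s - x) * (b * (1 - b) * s powr (b - 2))" if "s \<in> {x..y}" for s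
    proof -
      have "s powr (b - 2) \<le> x powr (b - 2)"
        using that xy b by (intro powr_mono2') auto
      then have "b * (1 - b) * s powr (b - 2) \<le> g"
        unfolding g_def using b by (simp add: mult_left_mono)
      then have "(s - x) * (b * (1 - b) * s powr (b - 2)) \<le> (s - x) * g"
        using that by (intro mult_left_mono) auto
      then show ?thesis
        by (simp add: mult.commute)
    qed
  qed (use xy in auto)
  then show "trapezoid_defect b x y \<le> b * (1 - b) * x powr (b - 2) * (y - x) ^ 3 / 6"
    by (simp add: F_def F'_def \<phi>_def \<phi>'_def g_def trapezoid_defect_def)
qed

lemma powr_ge_scaled:
  fixes c d e x y :: real
  assumes x: "0 < x" "x \<le> c * y" and c: "1 \<le> c" and e: "d \<le> e" "e \<le> 0"
  shows "c powr d * y powr e \<le> x powr e"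
proof -
  have "0 < y"
    using x c by (smt (verit) mult_nonneg_nonpos)
  have "c powr d * y powr e \<le> c powr e * y powr e"
    using c e by (intro mult_right_mono powr_mono) auto
  also have "\<dots> = (c * y) powr e"
    using \<open>0 < y\<close> c by (simp add: powr_mult)
  also have "\<dots> \<le> x powr e"
    using x e by (intro powr_mono2') auto
  finally show ?thesis .
qed

lemma powr_lt_six_mult_powr:
  fixes e x y :: real
  assumes e: "- 3 / 2 \<le> e" "e \<le> 0" and xy: "0 < x" "x \<le> y" "y \<le> 31 / 10 * x"
  shows "x powr e < 6 * y powr e"
proof -
  define p :: real where "p = (31 / 10) powr (- 3 / 2)"
  have "p * p = 1000 / 29791"
    unfolding p_def by (simp flip: powr_add add: powr_minus_divide power_divide)
  then have "(1 / 6) ^ 2 < p ^ 2"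
    by (simp add: power2_eq_square)
  then have "1 / 6 < p"
    by (rule power_less_imp_less_base) (simp add: p_def)
  then have "x powr e < 6 * (p * x powr e)"
    using xy by simp
  also have "p * x powr e \<le> y powr e"
    unfolding p_def using xy e by (intro powr_ge_scaled) auto
  finally show ?thesis
    by simp
qed

section \<open>Monotonicity away from the last node\<close>

locale log_nodes =
  fixes v :: "nat \<Rightarrow> real" and k :: nat
  assumes last_node: "v k = 0"
    and step_pos: "j < k \<Longrightarrow> v (Suc j) < v j"
    and step_antimono: "Suc j < k \<Longrightarrow> v (Suc j) - v (Suc (Suc j)) \<le> v j - v (Suc j)"
    and step_ratio: "j + 2 < k \<Longrightarrow> v j - v (Suc j) \<le> 21 / 20 * (v (j + 2) - v (j + 3))"
begin

lemma node_antimono: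
  assumes "i \<le> j" "j \<le> k"
  shows "v j \<le> v i"
  using assms(1)
proof (induction j rule: dec_induct)
  case (step n)
  then show ?case
    using step_pos[of n] assms(2) by simp
qed simp

lemma node_nonneg: "j \<le> k \<Longrightarrow> 0 \<le> v j"
  using node_antimono[of j k] last_node by simp

lemma node_pos: "j < k \<Longrightarrow> 0 < v j"
  using step_pos[of j] node_nonneg[of "Suc j"] by simp

lemma node_ratio:
  assumes "j + 2 < k"
  shows "v j \<le> 31 / 10 * v (j + 2)"
proof -
  have "v j - v (Suc j) \<le> 21 / 20 * v (j + 2)"
    using step_ratio[OF assms] node_nonneg[of "j + 3"] assms by simp
  moreover have "v (Suc j) - v (j + 2) \<le> v j - v (Suc j)"
    using step_antimono[of j] assms by (simp add: numeral_2_eq_2)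
  ultimately show ?thesis
    by simp
qed

lemma bcoef_v_nonpos:
  assumes b: "0 < b" "b < 1" and j: "2 \<le> j" "j < k"
  shows "bcoef_v b v j \<le> 0"
proof -
  have "v j < v (j - 1)" "v (j - 1) < v (j - 2)"
    using step_pos[of "j - 1"] step_pos[of "j - 2"] j by (simp_all add: numeral_2_eq_2 Suc_diff_Suc)
  then show ?thesis
    using trapezoid_defect_bounds(1)[OF b node_pos[of j] \<open>v j < v (j - 1)\<close>] j
    by (simp add: bcoef_v_def divide_nonneg_pos)
qed

lemma neg_bcoef_v_le:
  assumes b: "0 < b" "b < 1" and j: "2 \<le> j" "j < k"
  shows "- bcoef_v b v j \<le> b * (1 - b) * v j powr (b - 2) * (v (j - 1) - v j)\<^sup>2 / 12"
proof -
  define h where "h = v (j - 1) - v j"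
  define g where "g = b * (1 - b) * v j powr (b - 2)"
  have h: "0 < h" "h \<le> v (j - 2) - v (j - 1)"
    using step_pos[of "j - 1"] step_antimono[of "j - 2"] j
    by (simp_all add: h_def numeral_2_eq_2 Suc_diff_Suc)
  have g: "0 \<le> g"
    using b by (simp add: g_def)
  have "- bcoef_v b v j = trapezoid_defect b (v j) (v (j - 1)) / (h + (v (j - 2) - v (j - 1)))"
    by (simp add: bcoef_v_def h_def)
  also have "\<dots> \<le> g * h ^ 3 / 6 / (h + (v (j - 2) - v (j - 1)))"
    using trapezoid_defect_bounds(2)[OF b node_pos[of j]] h j
    by (intro divide_right_mono) (simp_all add: g_def h_def)
  also have "\<dots> \<le> g * h ^ 3 / 6 / (2 * h)"
    using h g by (intro divide_left_mono) auto
  also have "\<dots> = g * h\<^sup>2 / 12"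
    using h by (simp add: power2_eq_square power3_eq_cube)
  finally show ?thesis
    by (simp add: g_def h_def)
qed

lemma ccoef_v_upper:
  assumes b: "0 < b" "b < 1" and i: "1 \<le> i" "i + 2 \<le> k"
  shows "ccoef_v b v i k \<le> b * v i powr (b - 1)
    - b * (1 - b) * (v (i - 1) - v i) * (v (i - 1) powr (b - 2) / 2 - v i powr (b - 2) / 12)"
    (is "_ \<le> ?R")
proof -
  define h where "h = v (i - 1) - v i"
  have h: "0 < h"
    using step_pos[of "i - 1"] i by (simp add: h_def)
  have a: "acoef_v b v i \<le> h * (b * v i powr (b - 1)) - b * (1 - b) * v (i - 1) powr (b - 2) * h\<^sup>2 / 2"
    using powr_diff_bounds(2)[OF b node_pos[of i], of "v (i - 1)"] step_pos[of "i - 1"] i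
    by (simp add: acoef_v_def h_def)
  have own: "- (if i = 1 then 0 else bcoef_v b v i) \<le> b * (1 - b) * v i powr (b - 2) * h\<^sup>2 / 12"
    using neg_bcoef_v_le[OF b, of i] node_pos[of i] b i by (simp add: h_def)
  have following: "bcoef_v b v (i + 1) \<le> 0"
    using bcoef_v_nonpos[OF b] i by simp
  have "ccoef_num b v i k \<le> h * (b * v i powr (b - 1)) - b * (1 - b) * v (i - 1) powr (b - 2) * h\<^sup>2 / 2
      + b * (1 - b) * v i powr (b - 2) * h\<^sup>2 / 12"
    using a own following i by (simp add: ccoef_num_interior)
  also have "\<dots> = h * ?R"
    unfolding h_def[symmetric] by (simp add: power2_eq_square field_simps)
  finally show ?thesis
    using h by (simp add: ccoef_v_def h_def divide_simps mult.commute)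
qed

lemma ccoef_v_lower:
  assumes b: "0 < b" "b < 1" and i: "1 \<le> i" "i + 2 \<le> k"
  shows "b * v (i - 1) powr (b - 1)
    + b * (1 - b) * (v (i - 1) - v i) * (v (i - 1) powr (b - 2) / 2 - v (i + 1) powr (b - 2) / 12)
    \<le> ccoef_v b v i k" (is "?L \<le> _")
proof -
  define h where "h = v (i - 1) - v i"
  have h: "0 < h" "v i - v (i + 1) \<le> h"
    using step_pos[of "i - 1"] step_antimono[of "i - 1"] i by (simp_all add: h_def)
  have a: "h * (b * v (i - 1) powr (b - 1)) + b * (1 - b) * v (i - 1) powr (b - 2) * h\<^sup>2 / 2
      \<le> acoef_v b v i"
    using powr_diff_bounds(1)[OF b node_pos[of i], of "v (i - 1)"] step_pos[of "i - 1"] i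
    by (simp add: acoef_v_def h_def)
  have own: "0 \<le> - (if i = 1 then 0 else bcoef_v b v i)"
    using bcoef_v_nonpos[OF b, of i] i by simp
  have following: "- bcoef_v b v (i + 1) \<le> b * (1 - b) * v (i + 1) powr (b - 2) * h\<^sup>2 / 12"
  proof -
    have "(v i - v (i + 1))\<^sup>2 \<le> h\<^sup>2"
      using h step_pos[of i] i by (intro power_mono) auto
    then have "b * (1 - b) * v (i + 1) powr (b - 2) * (v i - v (i + 1))\<^sup>2
        \<le> b * (1 - b) * v (i + 1) powr (b - 2) * h\<^sup>2"
      using b by (intro mult_left_mono) auto
    then show ?thesis
      using neg_bcoef_v_le[OF b, of "i + 1"] i by simp
  qed
  have "h * ?L = h * (b * v (i - 1) powr (b - 1)) + b * (1 - b) * v (i - 1) powr (b - 2) * h\<^sup>2 / 2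
      - b * (1 - b) * v (i + 1) powr (b - 2) * h\<^sup>2 / 12"
    unfolding h_def[symmetric] by (simp add: power2_eq_square field_simps)
  also have "\<dots> \<le> ccoef_num b v i k"
    using a own following i by (simp add: ccoef_num_interior)
  finally show ?thesis
    using h by (simp add: ccoef_v_def h_def divide_simps mult.commute)
qed

lemma ccoef_v_less_Suc:
  assumes b: "1 / 2 \<le> b" "b < 1" and i: "1 \<le> i" "i + 3 \<le> k"
  shows "ccoef_v b v i k < ccoef_v b v (Suc i) k"
proof -
  have b': "0 < b" "b < 1"
    using b by auto
  have "v i powr (b - 2) \<le> 6 * v (i - 1) powr (b - 2)"
  proof -
    have "v (i - 1) \<le> 31 / 10 * v (i + 1)" "v (i + 1) \<le> v i" "v i \<le> v (i - 1)"
      using node_ratio[of "i - 1"] node_antimono[of i "i + 1"] node_antimono[of "i - 1" i] i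
      by simp_all
    then show ?thesis
      using powr_lt_six_mult_powr[of "b - 2" "v i" "v (i - 1)"] node_pos[of i] b i by simp
  qed
  moreover have "v i < v (i - 1)"
    using step_pos[of "i - 1"] i by simp
  ultimately have "0 \<le> b * (1 - b) * (v (i - 1) - v i)
      * (v (i - 1) powr (b - 2) / 2 - v i powr (b - 2) / 12)"
    using b' by (intro mult_nonneg_nonneg) auto
  then have "ccoef_v b v i k \<le> b * v i powr (b - 1)"
    using ccoef_v_upper[OF b' i(1)] i by simp
  also have "\<dots> < ccoef_v b v (Suc i) k"
  proof -
    have "v i \<le> 31 / 10 * v (i + 2)" "v (i + 2) \<le> v i"
      using node_ratio[of i] node_antimono[of i "i + 2"] i by simp_all
    then have "v (Suc (Suc i)) powr (b - 2) < 6 * v i powr (b - 2)"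
      using powr_lt_six_mult_powr[of "b - 2" "v (i + 2)" "v i"] node_pos[of "i + 2"] b i by simp
    then have "0 < b * (1 - b) * (v i - v (Suc i))
        * (v i powr (b - 2) / 2 - v (Suc (Suc i)) powr (b - 2) / 12)"
      using step_pos[of i] b' i by (intro mult_pos_pos) auto
    then show ?thesis
      using ccoef_v_lower[OF b', of "Suc i"] i by simp
  qed
  finally show ?thesis .
qed

lemma ccoef_v_first_pos:
  assumes b: "0 < b" "b < 1" and k: "3 \<le> k"
  shows "0 < ccoef_v b v 1 k"
proof -
  have v2: "0 < v 2"
    using node_pos[of 2] k by simp
  have ratio: "v 0 \<le> 31 / 10 * v 2"
    using node_ratio[of 0] k by (simp add: numeral_2_eq_2)
  have step: "0 < v 0 - v 1" "v 0 - v 1 \<le> 21 / 20 * v 2"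
    using step_pos[of 0] step_ratio[of 0] node_nonneg[of 3] k by (simp_all add: numeral_2_eq_2)
  have "(31 / 10) powr (- 1) * v 2 powr (b - 1) \<le> v 0 powr (b - 1)"
    using ratio node_pos[of 0] b k by (intro powr_ge_scaled) auto
  then have "10 / 31 * v 2 powr (b - 1) \<le> v 0 powr (b - 1)"
    by (simp add: powr_minus_divide)
  then have far_node: "b * (10 / 31 * v 2 powr (b - 1)) \<le> b * v 0 powr (b - 1)"
    using b by (intro mult_left_mono) auto
  define P where "P = b * (1 - b) * (v 0 - v 1)"
  have "(v 0 - v 1) * v 2 powr (b - 2) \<le> 21 / 20 * v 2 * v 2 powr (b - 2)"
    using step by (intro mult_right_mono) auto
  also have "\<dots> = 21 / 20 * v 2 powr (b - 1)"
    using v2 powr_mult_base[of "v 2" "b - 2"] by simp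
  finally have "b * (1 - b) * ((v 0 - v 1) * v 2 powr (b - 2)) \<le> b * (1 - b) * (21 / 20 * v 2 powr (b - 1))"
    using b by (intro mult_left_mono) auto
  then have near_step: "P * (v 2 powr (b - 2) / 12) \<le> b * (1 - b) * (21 / 20 * v 2 powr (b - 1)) / 12"
    by (simp add: P_def)
  have dropped: "0 \<le> P * (v 0 powr (b - 2) / 2)"
    using step b by (simp add: P_def)
  have split: "P * (v 0 powr (b - 2) / 2 - v 2 powr (b - 2) / 12)
      = P * (v 0 powr (b - 2) / 2) - P * (v 2 powr (b - 2) / 12)"
    by (rule right_diff_distrib)
  have "0 < b * v 2 powr (b - 1) * (10 / 31 - (1 - b) * 21 / 240)"
    using b v2 by simp
  also have "\<dots> = b * (10 / 31 * v 2 powr (b - 1)) - b * (1 - b) * (21 / 20 * v 2 powr (b - 1)) / 12"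
    by (simp add: algebra_simps)
  also have "\<dots> \<le> b * v 0 powr (b - 1) + P * (v 0 powr (b - 2) / 2 - v 2 powr (b - 2) / 12)"
    using far_node near_step dropped split by linarith
  also have "\<dots> \<le> ccoef_v b v 1 k"
    using ccoef_v_lower[OF b, of 1] k by (simp add: P_def numeral_2_eq_2)
  finally show ?thesis .
qed

end

section \<open>The last nodes of a fine uniform mesh\<close>

text \<open>For a uniform mesh and \<open>\<epsilon> = \<tau> / t (k - 1)\<close>, \<open>tail_nodes K \<epsilon> j\<close> is the log-node
  \<open>v (k - K + j)\<close> divided by the last log-step \<open>ln (1 + \<epsilon>)\<close>.\<close>

definition tail_nodes :: "nat \<Rightarrow> real \<Rightarrow> nat \<Rightarrow> real" where
  "tail_nodes K \<epsilon> j = ln ((1 + \<epsilon>) / (1 - (real (K - j) - 1) * \<epsilon>)) / ln (1 + \<epsilon>)"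

lemma tail_nodes_last: "K \<le> j \<Longrightarrow> 0 < \<epsilon> \<Longrightarrow> tail_nodes K \<epsilon> j = 0"
  by (simp add: tail_nodes_def)

lemma tail_nodes_before_last: "j + 1 = K \<Longrightarrow> 0 < \<epsilon> \<Longrightarrow> tail_nodes K \<epsilon> j = 1"
  by (auto simp: tail_nodes_def)

lemma tail_nodes_tendsto:
  assumes "j \<le> K" "K \<le> 4"
  shows "((\<lambda>\<epsilon>. tail_nodes K \<epsilon> j) \<longlongrightarrow> real (K - j)) (at_right 0)"
proof -
  consider "K \<le> j" | "j + 1 = K" | "K - j = 2" | "K - j = 3" | "K - j = 4"
    using assms by linarith
  then show ?thesis
  proof cases
    case 1
    have "eventually (\<lambda>\<epsilon>. tail_nodes K \<epsilon> j = real (K - j)) (at_right 0)"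
      using eventually_at_right_less[of "0::real"]
      by (rule eventually_mono) (use 1 in \<open>simp add: tail_nodes_last\<close>)
    then show ?thesis
      by (rule tendsto_eventually)
  next
    case 2
    have "eventually (\<lambda>\<epsilon>. tail_nodes K \<epsilon> j = real (K - j)) (at_right 0)"
      using eventually_at_right_less[of "0::real"]
      by (rule eventually_mono) (use 2 in \<open>simp add: tail_nodes_before_last\<close>)
    then show ?thesis
      by (rule tendsto_eventually)
  qed (simp_all add: tail_nodes_def; real_asymp)+
qed

lemma tail_nodes_nonneg:
  assumes "j \<le> K" "K \<le> 4"
  shows "eventually (\<lambda>\<epsilon>. 0 \<le> tail_nodes K \<epsilon> j) (at_right 0)"
proof (cases "K \<le> j")
  case True
  show ?thesis
    using eventually_at_right_less[of "0::real"]
    by (rule eventually_mono) (use True in \<open>simp add: tail_nodes_last\<close>)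
next
  case False
  then have "0 < real (K - j)"
    by simp
  from order_tendstoD(1)[OF tail_nodes_tendsto[OF assms] this] show ?thesis
    by eventually_elim simp
qed

lemma tendsto_ccoef_v:
  fixes w :: "'a \<Rightarrow> nat \<Rightarrow> real"
  assumes lim: "\<And>j. j \<le> k \<Longrightarrow> ((\<lambda>x. w x j) \<longlongrightarrow> w0 j) F"
    and nonneg: "\<And>j. j \<le> k \<Longrightarrow> eventually (\<lambda>x. 0 \<le> w x j) F"
    and inj: "inj_on w0 {..k}" and b: "0 < b" and i: "1 \<le> i" "i \<le> k"
  shows "((\<lambda>x. ccoef_v b (w x) i k) \<longlongrightarrow> ccoef_v b w0 i k) F"
proof -
  have distinct: "w0 j' - w0 j \<noteq> 0" if "j' < j" "j \<le> k" for j j'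
    using inj_onD[OF inj, of j' j] that by auto
  have a: "((\<lambda>x. acoef_v b (w x) j) \<longlongrightarrow> acoef_v b w0 j) F" if "j \<le> k" for j
    unfolding acoef_v_def using that b by (intro tendsto_intros lim nonneg disjI2 conjI) auto
  have bb: "((\<lambda>x. bcoef_v b (w x) j) \<longlongrightarrow> bcoef_v b w0 j) F" if "2 \<le> j" "j \<le> k" for j
    unfolding bcoef_v_def trapezoid_defect_def using that b distinct[of "j - 2" j]
    by (intro tendsto_intros lim nonneg disjI2 conjI) auto
  have "k \<noteq> 1 \<Longrightarrow> 2 \<le> k" "i \<noteq> k \<Longrightarrow> i + 1 \<le> k"
    using i by auto
  then have num: "((\<lambda>x. ccoef_num b (w x) i k) \<longlongrightarrow> ccoef_num b w0 i k) F"
    unfolding ccoef_num_def using i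
    by (cases "k = 1"; cases "i = 1"; cases "i = k") (auto intro!: tendsto_intros a bb)
  show ?thesis
    unfolding ccoef_v_def using i distinct[of "i - 1" i]
    by (intro tendsto_intros num lim) auto
qed

section \<open>Numerical inequalities\<close>

lemma power_double_le:
  fixes x c d :: real
  assumes "0 \<le> x" "x ^ n \<le> c" "c\<^sup>2 \<le> d" "m = 2 * n"
  shows "x ^ m \<le> d"
proof -
  have "x ^ m = (x ^ n)\<^sup>2"
    using assms(4) by (simp add: power_mult mult.commute)
  also have "\<dots> \<le> c\<^sup>2"
    using assms(1,2) by (intro power_mono) simp_all
  finally show ?thesis
    using assms(3) by simp
qed

lemma power_double_ge:
  fixes x c d :: real
  assumes "0 \<le> c" "c \<le> x ^ n" "d \<le> c\<^sup>2" "m = 2 * n"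
  shows "d \<le> x ^ m"
proof -
  have "c\<^sup>2 \<le> (x ^ n)\<^sup>2"
    using assms(1,2) by (intro power_mono) simp_all
  also have "\<dots> = x ^ m"
    using assms(4) by (simp add: power_mult mult.commute)
  finally show ?thesis
    using assms(3) by simp
qed

lemma le_powr_of_power_le:
  fixes c x :: real
  assumes "0 \<le> c" "0 < x" "0 < n" "c ^ n \<le> x ^ m"
  shows "c \<le> x powr (real m / real n)"
proof -
  have "c = (c ^ n) powr (1 / real n)"
    using assms(1,3) by (cases "c = 0") (simp_all add: powr_realpow[symmetric] powr_powr)
  also have "\<dots> \<le> (x ^ m) powr (1 / real n)"
    using assms by (intro powr_mono2) simp_all
  also have "\<dots> = x powr (real m / real n)"
    using assms(2) by (simp add: powr_realpow[symmetric] powr_powr)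
  finally show ?thesis .
qed

lemma powr_le_of_power_le:
  fixes c x :: real
  assumes "0 \<le> c" "0 < x" "0 < n" "x ^ m \<le> c ^ n"
  shows "x powr (real m / real n) \<le> c"
proof -
  have "x powr (real m / real n) = (x ^ m) powr (1 / real n)"
    using assms(2) by (simp add: powr_realpow[symmetric] powr_powr)
  also have "\<dots> \<le> (c ^ n) powr (1 / real n)"
    using assms by (intro powr_mono2) simp_all
  also have "\<dots> = c"
    using assms(1,3) by (cases "c = 0") (simp_all add: powr_realpow[symmetric] powr_powr)
  finally show ?thesis .
qed

lemma two_powr_67_107_ge: "15434601 / 10000000 \<le> (2::real) powr (67 / 107)"
proof -
  define L :: real where "L = 15434601 / 10000000"
  have L: "0 \<le> L"
    by (simp add: L_def)
  have L2: "L ^ 2 \<le> 238226908029201 / 100000000000000"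
    by (simp add: L_def power2_eq_square)
  have L4: "L ^ 4 \<le> 567520597091533918819 / 100000000000000000000"
    by (rule power_double_le[OF L L2]) (simp_all add: power2_eq_square)
  have L8: "L ^ 8 \<le> 1610398140615655887581 / 50000000000000000000"
    by (rule power_double_le[OF L L4]) (simp_all add: power2_eq_square)
  have L16: "L ^ 16 \<le> 103735286851934471714401 / 100000000000000000000"
    by (rule power_double_le[OF L L8]) (simp_all add: power2_eq_square)
  have L32: "L ^ 32 \<le> 107610097382531288788969403 / 100000000000000000000"
    by (rule power_double_le[OF L L16]) (simp_all add: power2_eq_square)
  have L64: "L ^ 64 \<le> 115799330586778673305622068762741 / 100000000000000000000"
    by (rule power_double_le[OF L L32]) (simp_all add: power2_eq_square)
  have "L ^ 107 = L ^ 64 * L ^ 32 * L ^ 8 * L ^ 2 * L"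
    by (simp flip: power_add power_Suc2)
  also have "\<dots> \<le> 115799330586778673305622068762741 / 100000000000000000000
      * (107610097382531288788969403 / 100000000000000000000)
      * (1610398140615655887581 / 50000000000000000000)
      * (238226908029201 / 100000000000000) * L"
    using L64 L32 L8 L2 L by (intro mult_mono) auto
  also have "\<dots> \<le> 2 ^ 67"
    by (simp add: L_def)
  finally show ?thesis
    using le_powr_of_power_le[of L 2 107 67] L by (simp add: L_def)
qed

lemma three_powr_67_107_le: "(3::real) powr (67 / 107) \<le> 4973913 / 2500000"
proof -
  define U :: real where "U = 4973913 / 2500000"
  have U: "0 \<le> U"
    by (simp add: U_def)
  have U2: "24739810531569 / 6250000000000 \<le> U ^ 2"
    by (simp add: U_def power2_eq_square)
  have U4: "391717264088276740061 / 25000000000000000000 \<le> U ^ 4"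
    by (rule power_double_ge[OF _ U2]) (simp_all add: U_def power2_eq_square)
  have U8: "24550786397568758750537 / 100000000000000000000 \<le> U ^ 8"
    by (rule power_double_ge[OF _ U4]) (simp_all add: U_def power2_eq_square)
  have U16: "1506852781847617977002601 / 25000000000000000000 \<le> U ^ 16"
    by (rule power_double_ge[OF _ U8]) (simp_all add: U_def power2_eq_square)
  have U32: "22706053061619049734623829571 / 6250000000000000000 \<le> U ^ 32"
    by (rule power_double_ge[OF _ U16]) (simp_all add: U_def power2_eq_square)
  have U64: "164980750603859143028773282816714101593 / 12500000000000000000 \<le> U ^ 64"
    by (rule power_double_ge[OF _ U32]) (simp_all add: U_def power2_eq_square)
  have "3 ^ 67 \<le> 164980750603859143028773282816714101593 / 12500000000000000000
      * (22706053061619049734623829571 / 6250000000000000000)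
      * (24550786397568758750537 / 100000000000000000000)
      * (24739810531569 / 6250000000000) * U"
    by (simp add: U_def)
  also have "\<dots> \<le> U ^ 64 * U ^ 32 * U ^ 8 * U ^ 2 * U"
    using U64 U32 U8 U2 U
    by (intro mult_mono) (auto simp del: zero_le_power)
  also have "\<dots> = U ^ 107"
    by (simp flip: power_add power_Suc2)
  finally show ?thesis
    using powr_le_of_power_le[of U 3 107 67] U by (simp add: U_def)
qed

lemma two_powr_le_one_plus: "0 \<le> b \<Longrightarrow> b \<le> 1 \<Longrightarrow> (2::real) powr b \<le> 1 + b"
  using convex_onD[OF exp_convex, of b 0 "ln 2"] by (simp add: powr_def)

lemma concave_pos_before_zero:
  fixes f f' f'' :: "real \<Rightarrow> real"
  assumes pq: "p < q"
    and f': "\<And>x. x \<in> {p..q} \<Longrightarrow> (f has_real_derivative f' x) (at x)"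
    and f'': "\<And>x. x \<in> {p..q} \<Longrightarrow> (f' has_real_derivative f'' x) (at x)"
    and concave: "\<And>x. x \<in> {p..q} \<Longrightarrow> f'' x \<le> 0"
    and fp: "0 < f p" and fq: "f q = 0" and x: "p \<le> x" "x < q"
  shows "0 < f x"
proof -
  define t where "t = (x - p) / (q - p)"
  have "(1 - t) * p + t * q = p + t * (q - p)"
    by (simp add: algebra_simps)
  also have "t * (q - p) = x - p"
    using pq by (simp add: t_def)
  finally have t: "0 \<le> t" "t < 1" "x = (1 - t) * p + t * q"
    using pq x by (simp_all add: t_def divide_less_eq_1_pos)
  have "(1 - t) * f p + t * f q \<le> f ((1 - t) *\<^sub>R p + t *\<^sub>R q)"
    by (rule concave_onD[OF f''_le0_imp_concave[OF convex_real_interval(5) f' f'' concave]])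
      (use pq t in auto)
  moreover have "0 < (1 - t) * f p"
    using t fp by simp
  ultimately show ?thesis
    using t fq by simp
qed

lemma ln_3_ge: "79 / 50 * ln (2::real) \<le> ln 3"
proof -
  have "79 * ln (2::real) = ln (2 ^ 79)"
    using ln_realpow[of 2 79] by simp
  also have "\<dots> \<le> ln (3 ^ 50)"
    by simp
  also have "\<dots> = 50 * ln 3"
    using ln_realpow[of 3 50] by simp
  finally show ?thesis
    by linarith
qed

lemma two_three_combination_concavity:
  fixes p q r s y :: real
  assumes nonneg: "0 \<le> p" "0 \<le> q" "0 \<le> r" "0 \<le> s"
    and curvature: "2 * p + (p + q) * (25 / 36)
      \<le> (2 * r + (r * (67 / 107) + s) * (79 / 75)) * (79 / 50) * (1 + 67 / 107 * (29 / 75))"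
    and y: "67 / 107 \<le> y" "y \<le> 1"
  shows "(2 * p + (p * y + q) * ln 2) * (ln 2 * exp (y * ln 2))
    \<le> (2 * r + (r * y + s) * ln 3) * (ln 3 * exp (y * ln 3))"
proof -
  define l2 :: real where "l2 = ln 2"
  define l3 :: real where "l3 = ln 3"
  have l2: "2 / 3 \<le> l2" "l2 \<le> 25 / 36"
    using ln2_ge_two_thirds ln2_le_25_over_36 by (simp_all add: l2_def)
  have l3: "79 / 50 * l2 \<le> l3"
    using ln_3_ge by (simp add: l2_def l3_def)
  define c where "c = 1 + 67 / 107 * (29 / 75 :: real)"
  have "29 / 75 \<le> l3 - l2"
    using l2 l3 by linarith
  then have "67 / 107 * (29 / 75) \<le> y * (l3 - l2)"
    using y by (intro mult_mono) auto
  then have "c \<le> 1 + y * (l3 - l2)"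
    by (simp add: c_def)
  also have "\<dots> \<le> exp (y * (l3 - l2))"
    by (rule exp_ge_add_one_self)
  finally have "c * exp (y * l2) \<le> exp (y * (l3 - l2)) * exp (y * l2)"
    by (intro mult_right_mono) auto
  also have "\<dots> = exp (y * l3)"
    by (simp flip: exp_add add: algebra_simps)
  finally have e3: "c * exp (y * l2) \<le> exp (y * l3)" .
  have "(p * y + q) * l2 \<le> (p + q) * (25 / 36)"
    using y l2 nonneg by (intro mult_mono) (auto simp: mult_left_le)
  then have "(2 * p + (p * y + q) * l2) * (l2 * exp (y * l2))
      \<le> (2 * p + (p + q) * (25 / 36)) * (l2 * exp (y * l2))"
    using l2 by (intro mult_right_mono) auto
  also have "\<dots> \<le> (2 * r + (r * (67 / 107) + s) * (79 / 75)) * (79 / 50) * c * (l2 * exp (y * l2))"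
    using curvature l2 by (intro mult_right_mono) (auto simp: c_def)
  also have "\<dots> = (2 * r + (r * (67 / 107) + s) * (79 / 75)) * ((79 / 50 * l2) * (c * exp (y * l2)))"
    by (simp add: algebra_simps)
  also have "\<dots> \<le> (2 * r + (r * y + s) * l3) * (l3 * exp (y * l3))"
  proof (intro mult_mono)
    have "(r * (67 / 107) + s) * (79 / 75) \<le> (r * y + s) * l3"
      using y l2 l3 nonneg by (intro mult_mono add_right_mono mult_left_mono) auto
    then show "2 * r + (r * (67 / 107) + s) * (79 / 75) \<le> 2 * r + (r * y + s) * l3"
      by simp
  qed (use e3 l2 l3 nonneg y in \<open>auto simp: c_def intro!: add_nonneg_nonneg mult_nonneg_nonneg\<close>)
  finally show ?thesis
    by (simp add: l2_def l3_def)
qed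

text \<open>The function of \<open>x\<close> on the right is concave on \<open>[67/107, 1]\<close> and vanishes at \<open>1\<close>.\<close>

lemma two_three_powr_combination_pos:
  fixes p q r s x :: real
  assumes nonneg: "0 \<le> p" "0 \<le> q" "0 \<le> r" "0 \<le> s"
    and at_one: "2 * (p + q) = 3 * (r + s) + 12"
    and curvature: "2 * p + (p + q) * (25 / 36)
      \<le> (2 * r + (r * (67 / 107) + s) * (79 / 75)) * (79 / 50) * (1 + 67 / 107 * (29 / 75))"
    and at_start: "3 * (67 / 107) + 9
      < (p * (67 / 107) + q) * (15434601 / 10000000) - (r * (67 / 107) + s) * (4973913 / 2500000)"
    and x: "67 / 107 \<le> x" "x < 1"
  shows "0 < (p * x + q) * 2 powr x - (r * x + s) * 3 powr x - 3 * x - 9"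
proof -
  define f where "f y = (p * y + q) * exp (y * ln 2) - (r * y + s) * exp (y * ln 3) - 3 * y - 9"
    for y :: real
  define f' where "f' y = p * exp (y * ln 2) + (p * y + q) * (ln 2 * exp (y * ln 2))
    - r * exp (y * ln 3) - (r * y + s) * (ln 3 * exp (y * ln 3)) - 3" for y :: real
  define f'' where "f'' y = (2 * p + (p * y + q) * ln 2) * (ln 2 * exp (y * ln 2))
    - (2 * r + (r * y + s) * ln 3) * (ln 3 * exp (y * ln 3))" for y :: real
  have d1: "(f has_real_derivative f' y) (at y)" for y
    unfolding f_def f'_def by (auto intro!: derivative_eq_intros simp: algebra_simps)
  have d2: "(f' has_real_derivative f'' y) (at y)" for y
    unfolding f'_def f''_def by (auto intro!: derivative_eq_intros simp: algebra_simps)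
  have concave: "f'' y \<le> 0" if "y \<in> {67 / 107..1}" for y
    using two_three_combination_concavity[OF nonneg curvature, of y] that by (simp add: f''_def)
  have "0 < f (67 / 107)"
  proof -
    have two: "15434601 / 10000000 \<le> exp (67 / 107 * ln (2::real))"
      and three: "exp (67 / 107 * ln (3::real)) \<le> 4973913 / 2500000"
      using two_powr_67_107_ge three_powr_67_107_le by (simp_all add: powr_def)
    have "(p * (67 / 107) + q) * (15434601 / 10000000) \<le> (p * (67 / 107) + q) * exp (67 / 107 * ln 2)"
      using nonneg by (intro mult_left_mono[OF two]) simp
    moreover have "(r * (67 / 107) + s) * exp (67 / 107 * ln 3) \<le> (r * (67 / 107) + s) * (4973913 / 2500000)"
      using nonneg by (intro mult_left_mono[OF three]) simp
    ultimately show ?thesis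
      using at_start unfolding f_def by linarith
  qed
  moreover have "f 1 = 0"
    using at_one by (simp add: f_def)
  ultimately have "0 < f x"
    using concave_pos_before_zero[of "67 / 107" 1 f f' f'', OF _ d1 d2 concave] x by simp
  then show ?thesis
    by (simp add: f_def powr_def)
qed

section \<open>The limiting comparisons\<close>

lemma uniform_window_formulas:
  fixes b :: real
  assumes "0 < b"
  shows "ccoef_v b (\<lambda>j. real (2 - j)) 1 2 = 2 powr b - 1 - (1 - b) / (2 * (b + 1))"
    and "ccoef_v b (\<lambda>j. real (2 - j)) 2 2 - ccoef_v b (\<lambda>j. real (2 - j)) 1 2
      = (b + 3 - (b + 1) * 2 powr b) / (b + 1)"
    and "ccoef_v b (\<lambda>j. real (3 - j)) 2 3 - ccoef_v b (\<lambda>j. real (3 - j)) 1 3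
      = ((2 * b + 10) * 2 powr b - (2 * b + 2) * 3 powr b - 3 * b - 9) / (2 * (b + 1))"
    and "ccoef_v b (\<lambda>j. real (3 - j)) 3 3 - ccoef_v b (\<lambda>j. real (3 - j)) 2 3
      = (3 * b + 9 - (b + 5) * 2 powr b) / (2 * (b + 1))"
    and "ccoef_v b (\<lambda>j. real (4 - j)) 3 4 - ccoef_v b (\<lambda>j. real (4 - j)) 2 4
      = ((3 * b + 15) * 2 powr b - (b + 7) * 3 powr b - 3 * b - 9) / (2 * (b + 1))"
proof -
  define d where "d = b + 1"
  have d: "0 < d" "b = d - 1"
    using assms by (simp_all add: d_def)
  have p: "(2::real) powr d = 2 * 2 powr (d - 1)" "(3::real) powr d = 3 * 3 powr (d - 1)"
    using powr_mult_base[of 2 "d - 1"] powr_mult_base[of 3 "d - 1"] by simp_all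
  note defs = ccoef_v_def ccoef_num_def acoef_v_def bcoef_v_def trapezoid_defect_def d(2)
  show "ccoef_v b (\<lambda>j. real (2 - j)) 1 2 = 2 powr b - 1 - (1 - b) / (2 * (b + 1))"
    unfolding defs using d(1) by (simp add: p field_simps)
  show "ccoef_v b (\<lambda>j. real (2 - j)) 2 2 - ccoef_v b (\<lambda>j. real (2 - j)) 1 2
      = (b + 3 - (b + 1) * 2 powr b) / (b + 1)"
    unfolding defs using d(1) by (simp add: p field_simps)
  show "ccoef_v b (\<lambda>j. real (3 - j)) 2 3 - ccoef_v b (\<lambda>j. real (3 - j)) 1 3
      = ((2 * b + 10) * 2 powr b - (2 * b + 2) * 3 powr b - 3 * b - 9) / (2 * (b + 1))"
    unfolding defs using d(1) by (simp add: p field_simps)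
  show "ccoef_v b (\<lambda>j. real (3 - j)) 3 3 - ccoef_v b (\<lambda>j. real (3 - j)) 2 3
      = (3 * b + 9 - (b + 5) * 2 powr b) / (2 * (b + 1))"
    unfolding defs using d(1) by (simp add: p field_simps)
  show "ccoef_v b (\<lambda>j. real (4 - j)) 3 4 - ccoef_v b (\<lambda>j. real (4 - j)) 2 4
      = ((3 * b + 15) * 2 powr b - (b + 7) * 3 powr b - 3 * b - 9) / (2 * (b + 1))"
    unfolding defs using d(1) by (simp add: p field_simps)
qed

lemma uniform_window_ordered:
  fixes b :: real
  assumes b: "67 / 107 \<le> b" "b < 1"
  shows "0 < ccoef_v b (\<lambda>j. real (2 - j)) 1 2"
    and "ccoef_v b (\<lambda>j. real (2 - j)) 1 2 < ccoef_v b (\<lambda>j. real (2 - j)) 2 2"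
    and "ccoef_v b (\<lambda>j. real (3 - j)) 1 3 < ccoef_v b (\<lambda>j. real (3 - j)) 2 3"
    and "ccoef_v b (\<lambda>j. real (3 - j)) 2 3 < ccoef_v b (\<lambda>j. real (3 - j)) 3 3"
    and "ccoef_v b (\<lambda>j. real (4 - j)) 2 4 < ccoef_v b (\<lambda>j. real (4 - j)) 3 4"
proof -
  have b0: "0 < b"
    using b by simp
  note formulas = uniform_window_formulas[OF b0]
  have gap: "x < y" if "y - x = N / D" "0 < N" "0 < D" for x y N D :: real
    using that divide_pos_pos[of N D] by linarith
  have two_powr: "2 powr b \<le> 1 + b"
    using two_powr_le_one_plus[of b] b by simp
  have b_sq: "b * b < 1"
    using mult_strict_mono[of b 1 b 1] b by simp
  have "1 + 67 / 107 * (2 / 3) \<le> 2 powr b"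
  proof -
    have "67 / 107 * (2 / 3) \<le> b * ln (2::real)"
      using b ln2_ge_two_thirds by (intro mult_mono) auto
    also have "1 + b * ln 2 \<le> 2 powr b"
      unfolding powr_def by (simp add: exp_ge_add_one_self)
    finally show ?thesis
      by simp
  qed
  moreover have "(1 - b) / (2 * (b + 1)) \<le> 1 / 4"
    using b by (simp add: divide_simps)
  ultimately show "0 < ccoef_v b (\<lambda>j. real (2 - j)) 1 2"
    unfolding formulas(1) by linarith
  have "(b + 1) * 2 powr b \<le> (b + 1) * (1 + b)"
    using two_powr b0 by (intro mult_left_mono) auto
  then show "ccoef_v b (\<lambda>j. real (2 - j)) 1 2 < ccoef_v b (\<lambda>j. real (2 - j)) 2 2"
    using b b_sq by (intro gap[OF formulas(2)]) (auto simp: algebra_simps)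
  show "ccoef_v b (\<lambda>j. real (3 - j)) 1 3 < ccoef_v b (\<lambda>j. real (3 - j)) 2 3"
    using two_three_powr_combination_pos[of 2 10 2 2 b] b by (intro gap[OF formulas(3)]) simp_all
  have "(b + 5) * 2 powr b \<le> (b + 5) * (1 + b)"
    using two_powr b0 by (intro mult_left_mono) auto
  then show "ccoef_v b (\<lambda>j. real (3 - j)) 2 3 < ccoef_v b (\<lambda>j. real (3 - j)) 3 3"
    using b b_sq by (intro gap[OF formulas(4)]) (auto simp: algebra_simps)
  show "ccoef_v b (\<lambda>j. real (4 - j)) 2 4 < ccoef_v b (\<lambda>j. real (4 - j)) 3 4"
    using two_three_powr_combination_pos[of 3 15 1 7 b] b by (intro gap[OF formulas(5)]) simp_all
qed

text \<open>Rescaled as in \<open>uniform_mesh.ccoef_v_eq_tail\<close>, these are the comparisons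
  c(k-2,k) < c(k-1,k) < c(k,k) and c(1,2) > 0, which the Taylor estimates do not reach.\<close>

definition window_ordered :: "real \<Rightarrow> real \<Rightarrow> bool" where
  "window_ordered b \<epsilon> \<longleftrightarrow>
     0 < ccoef_v b (tail_nodes 2 \<epsilon>) 1 2 \<and>
     ccoef_v b (tail_nodes 2 \<epsilon>) 1 2 < ccoef_v b (tail_nodes 2 \<epsilon>) 2 2 \<and>
     ccoef_v b (tail_nodes 3 \<epsilon>) 1 3 < ccoef_v b (tail_nodes 3 \<epsilon>) 2 3 \<and>
     ccoef_v b (tail_nodes 3 \<epsilon>) 2 3 < ccoef_v b (tail_nodes 3 \<epsilon>) 3 3 \<and>
     ccoef_v b (tail_nodes 4 \<epsilon>) 2 4 < ccoef_v b (tail_nodes 4 \<epsilon>) 3 4"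

lemma eventually_window_ordered:
  assumes b: "67 / 107 \<le> b" "b < 1"
  shows "eventually (window_ordered b) (at_right 0)"
proof -
  have lim: "((\<lambda>\<epsilon>. ccoef_v b (tail_nodes K \<epsilon>) i K) \<longlongrightarrow> ccoef_v b (\<lambda>j. real (K - j)) i K) (at_right 0)"
    if "K \<le> 4" "1 \<le> i" "i \<le> K" for K i
    using that b by (intro tendsto_ccoef_v tail_nodes_tendsto tail_nodes_nonneg) (auto simp: inj_on_def)
  have less: "eventually (\<lambda>\<epsilon>. ccoef_v b (tail_nodes K \<epsilon>) i K < ccoef_v b (tail_nodes K \<epsilon>) i' K) (at_right 0)"
    if "ccoef_v b (\<lambda>j. real (K - j)) i K < ccoef_v b (\<lambda>j. real (K - j)) i' K"
      "K \<le> 4" "1 \<le> i" "i \<le> K" "1 \<le> i'" "i' \<le> K" for K i i'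
  proof -
    have "((\<lambda>\<epsilon>. ccoef_v b (tail_nodes K \<epsilon>) i' K - ccoef_v b (tail_nodes K \<epsilon>) i K)
        \<longlongrightarrow> ccoef_v b (\<lambda>j. real (K - j)) i' K - ccoef_v b (\<lambda>j. real (K - j)) i K) (at_right 0)"
      using that by (intro tendsto_diff lim) auto
    moreover have "0 < ccoef_v b (\<lambda>j. real (K - j)) i' K - ccoef_v b (\<lambda>j. real (K - j)) i K"
      using that(1) by simp
    ultimately show ?thesis
      by (rule order_tendstoD(1)[THEN eventually_mono]) simp
  qed
  have pos: "eventually (\<lambda>\<epsilon>. 0 < ccoef_v b (tail_nodes 2 \<epsilon>) 1 2) (at_right 0)"
    using order_tendstoD(1)[OF lim uniform_window_ordered(1)[OF b]] by simp
  show ?thesis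
    unfolding window_ordered_def
    using pos less[OF uniform_window_ordered(2)[OF b]] less[OF uniform_window_ordered(3)[OF b]]
      less[OF uniform_window_ordered(4)[OF b]] less[OF uniform_window_ordered(5)[OF b]]
    by (simp add: eventually_conj_iff)
qed

section \<open>Uniform meshes\<close>

locale uniform_mesh =
  fixes a \<tau> :: real and k :: nat
  assumes a_pos: "0 < a" and tau_pos: "0 < \<tau>" and tau_small: "60 * \<tau> \<le> a"
begin

definition t :: "nat \<Rightarrow> real" where
  "t j = a + real j * \<tau>"

definition v :: "nat \<Rightarrow> real" where
  "v j = ln (t k / t j)"

lemma t_ge: "a \<le> t j"
  using tau_pos by (simp add: t_def)

lemma t_pos: "0 < t j"
  using t_ge[of j] a_pos by simp

lemma t_Suc: "t (Suc j) = t j + \<tau>"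
  by (simp add: t_def algebra_simps)

lemma v_step: "v j - v (Suc j) = ln (1 + \<tau> / t j)"
proof -
  have "v j - v (Suc j) = ln (t (Suc j) / t j)"
    using t_pos[of j] t_pos[of k] t_pos[of "Suc j"] by (simp add: v_def ln_div)
  also have "t (Suc j) / t j = 1 + \<tau> / t j"
    using t_pos[of j] by (simp add: t_Suc field_simps)
  finally show ?thesis .
qed

lemma log_step_pos: "0 < ln (1 + \<tau> / t j)"
  using t_pos[of j] tau_pos by (intro ln_gt_zero) simp

lemma log_step_antimono: "i \<le> j \<Longrightarrow> ln (1 + \<tau> / t j) \<le> ln (1 + \<tau> / t i)"
  using t_pos[of i] t_pos[of j] tau_pos by (simp add: t_def divide_left_mono add_pos_pos)

lemma log_step_ratio: "ln (1 + \<tau> / t j) \<le> 21 / 20 * ln (1 + \<tau> / t (j + 2))"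
proof -
  have "ln (1 + \<tau> / t j) \<le> \<tau> / t j"
    using t_pos[of j] tau_pos by (intro ln_add_one_self_le_self) simp
  also have "\<dots> \<le> 21 / 20 * (\<tau> / (t j + 3 * \<tau>))"
    using t_ge[of j] t_pos[of j] tau_small tau_pos by (simp add: field_simps)
  also have "t j + 3 * \<tau> = t (j + 2) + \<tau>"
    by (simp add: t_def algebra_simps)
  also have "\<tau> / (t (j + 2) + \<tau>) = (\<tau> / t (j + 2)) / (1 + \<tau> / t (j + 2))"
    using t_pos[of "j + 2"] by (simp add: field_simps)
  also have "\<dots> \<le> ln (1 + \<tau> / t (j + 2))"
    using ln_add1_ge[of "\<tau> / t (j + 2)"] t_pos[of "j + 2"] tau_pos by (simp add: add.commute)
  finally show ?thesis
    by simp
qed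

sublocale log_nodes v k
proof
  show "v k = 0"
    using t_pos[of k] by (simp add: v_def)
  show "v (Suc j) < v j" for j
    using v_step[of j] log_step_pos[of j] by simp
  show "v (Suc j) - v (Suc (Suc j)) \<le> v j - v (Suc j)" for j
    using v_step[of j] v_step[of "Suc j"] log_step_antimono[of j "Suc j"] by simp
  show "v j - v (Suc j) \<le> 21 / 20 * (v (j + 2) - v (j + 3))" for j
    using v_step[of j] v_step[of "j + 2"] log_step_ratio[of j] by (simp add: numeral_3_eq_3)
qed

lemma v_eq_tail_nodes:
  assumes "j \<le> K" "K \<le> k"
  shows "v (j + (k - K)) = ln (1 + \<tau> / t (k - 1)) * tail_nodes K (\<tau> / t (k - 1)) j"
proof (cases "K = 0")
  case True
  then show ?thesis
    using assms by (simp add: v_def tail_nodes_def)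
next
  case False
  define \<epsilon> where "\<epsilon> = \<tau> / t (k - 1)"
  have k: "1 \<le> k" "t k = t (k - 1) * (1 + \<epsilon>)"
    using False assms t_Suc[of "k - 1"] t_pos[of "k - 1"] by (auto simp: \<epsilon>_def field_simps)
  have "t (j + (k - K)) = t (k - 1) * (1 - (real (K - j) - 1) * \<epsilon>)"
    using assms k(1) t_pos[of "k - 1"] by (simp add: t_def \<epsilon>_def of_nat_diff field_simps)
  moreover have "ln (1 + \<epsilon>) \<noteq> 0"
    using log_step_pos[of "k - 1"] by (simp add: \<epsilon>_def)
  ultimately show ?thesis
    using t_pos[of "k - 1"] unfolding \<epsilon>_def[symmetric] by (simp add: v_def tail_nodes_def k(2))
qed

lemma ccoef_v_eq_tail:
  assumes K: "2 \<le> K" "K \<le> k" and i: "1 \<le> i" "i \<le> K" "K = k \<or> 2 \<le> i"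
  shows "ccoef_v b v (i + (k - K)) k
    = ln (1 + \<tau> / t (k - 1)) powr (b - 1) * ccoef_v b (tail_nodes K (\<tau> / t (k - 1))) i K"
proof -
  define d where "d = k - K"
  define S where "S = ln (1 + \<tau> / t (k - 1))"
  have S: "0 < S"
    using log_step_pos by (simp add: S_def)
  have tail: "v (j + d) = S * tail_nodes K (\<tau> / t (k - 1)) j" if "j \<le> K" for j
    using v_eq_tail_nodes[OF that K(2)] by (simp add: d_def S_def)
  have "ccoef_v b v (i + d) (K + d) = ccoef_v b (\<lambda>j. v (j + d)) i K"
  proof (cases "d = 0")
    case False
    then have "2 \<le> i"
      using i K by (auto simp: d_def)
    then show ?thesis
      by (rule ccoef_v_shift[OF _ i(2)])
  qed simp
  also have "\<dots> = ccoef_v b (\<lambda>j. S * tail_nodes K (\<tau> / t (k - 1)) j) i K"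
    using i tail by (intro ccoef_v_cong) auto
  also have "\<dots> = S powr (b - 1) * ccoef_v b (tail_nodes K (\<tau> / t (k - 1))) i K"
  proof (rule ccoef_v_scale[OF S _ i(1,2)])
    show "0 \<le> tail_nodes K (\<tau> / t (k - 1)) j" if "j \<le> K" for j
      using tail[OF that] node_nonneg[of "j + d"] that K S by (simp add: d_def zero_le_mult_iff)
  qed
  finally show ?thesis
    using K by (simp add: d_def S_def)
qed

lemma ccoef_v_less_of_tail:
  assumes K: "2 \<le> K" "K \<le> k" and i: "1 \<le> i" "i < K" "K = k \<or> 2 \<le> i"
    and less: "ccoef_v b (tail_nodes K (\<tau> / t (k - 1))) i K
      < ccoef_v b (tail_nodes K (\<tau> / t (k - 1))) (i + 1) K"
    and j: "j = i + 1 + (k - K)"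
  shows "ccoef_v b v (j - 1) k < ccoef_v b v j k"
proof -
  have "j - 1 = i + (k - K)"
    using j by simp
  then show ?thesis
    using less log_step_pos[of "k - 1"] ccoef_v_eq_tail[OF K, of i] ccoef_v_eq_tail[OF K, of "i + 1"] i j
    by simp
qed

lemma ccoef_v_ordered:
  assumes b: "67 / 107 \<le> b" "b < 1" and k: "2 \<le> k"
    and window: "window_ordered b (\<tau> / t (k - 1))"
  shows "0 < ccoef_v b v 1 k"
    and "2 \<le> i \<Longrightarrow> i \<le> k \<Longrightarrow> ccoef_v b v (i - 1) k < ccoef_v b v i k"
proof -
  have b': "0 < b" "1 / 2 \<le> b"
    using b by simp_all
  show "0 < ccoef_v b v 1 k"
  proof (cases "k = 2")
    case True
    then show ?thesis
      using window ccoef_v_eq_tail[of 2 1 b] log_step_pos[of 1] by (simp add: window_ordered_def)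
  qed (use ccoef_v_first_pos[OF b'(1) b(2)] k in simp)
  assume i: "2 \<le> i" "i \<le> k"
  consider "i + 2 \<le> k" | "i = k" "k = 2" | "i = k" "3 \<le> k" | "i + 1 = k" "k = 3" | "i + 1 = k" "4 \<le> k"
    using i by linarith
  then show "ccoef_v b v (i - 1) k < ccoef_v b v i k"
  proof cases
    case 1
    then show ?thesis
      using ccoef_v_less_Suc[OF b'(2) b(2), of "i - 1"] i by simp
  next
    case 2
    then show ?thesis
      by (intro ccoef_v_less_of_tail[where K = 2 and i = 1])
        (use window in \<open>auto simp: window_ordered_def numeral_2_eq_2\<close>)
  next
    case 3
    then show ?thesis
      by (intro ccoef_v_less_of_tail[where K = 3 and i = 2])
        (use window in \<open>auto simp: window_ordered_def\<close>)
  next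
    case 4
    then show ?thesis
      by (intro ccoef_v_less_of_tail[where K = 3 and i = 1])
        (use window in \<open>auto simp: window_ordered_def numeral_2_eq_2\<close>)
  next
    case 5
    then show ?thesis
      by (intro ccoef_v_less_of_tail[where K = 4 and i = 2])
        (use window in \<open>auto simp: window_ordered_def\<close>)
  qed
qed

lemma ccoef_ordered:
  assumes \<alpha>: "0 < \<alpha>" "\<alpha> < 0.3738" and k: "2 \<le> k"
    and window: "window_ordered (1 - \<alpha>) (\<tau> / t (k - 1))"
  shows "0 < ccoef \<alpha> t 1 k"
    and "2 \<le> i \<Longrightarrow> i \<le> k \<Longrightarrow> ccoef \<alpha> t (i - 1) k < ccoef \<alpha> t i k"
proof -
  have b: "67 / 107 \<le> 1 - \<alpha>" "1 - \<alpha> < 1"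
    using \<alpha> by simp_all
  have Gamma: "0 < Gamma (2 - \<alpha>)"
    using \<alpha> by (intro Gamma_real_pos) simp
  have c: "ccoef \<alpha> t j k = ccoef_v (1 - \<alpha>) v j k / Gamma (2 - \<alpha>)" for j
    using ccoef_eq_ccoef_v[of t \<alpha> j k] t_pos by (simp add: v_def[abs_def])
  show "0 < ccoef \<alpha> t 1 k"
    using ccoef_v_ordered(1)[OF b k window] Gamma by (simp add: c)
  show "ccoef \<alpha> t (i - 1) k < ccoef \<alpha> t i k" if "2 \<le> i" "i \<le> k"
    using ccoef_v_ordered(2)[OF b k window that] Gamma by (simp add: c divide_strict_right_mono)
qed

end

theorem lemma2p5:
  fixes a T \<alpha> :: real
  assumes "a > 0" and "T > a" and "0 < \<alpha>" and "\<alpha> < 0.3738"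
  shows "\<exists>\<tau>0 > 0. \<forall>N::nat. N > 0 \<longrightarrow> (T - a) / real N < \<tau>0 \<longrightarrow>
           (\<forall>k. 2 \<le> k \<and> k \<le> N \<longrightarrow>
              ccoef \<alpha> (grid a T N) 1 k > 0 \<and>
              (\<forall>i. 2 \<le> i \<and> i \<le> k \<longrightarrow>
                 ccoef \<alpha> (grid a T N) i k > ccoef \<alpha> (grid a T N) (i - 1) k))"
proof -
  obtain \<epsilon>0 where \<epsilon>0: "0 < \<epsilon>0" "\<And>\<epsilon>. 0 < \<epsilon> \<Longrightarrow> \<epsilon> < \<epsilon>0 \<Longrightarrow> window_ordered (1 - \<alpha>) \<epsilon>"
    using eventually_window_ordered[of "1 - \<alpha>"] assms(3,4) by (auto simp: eventually_at_right_field)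
  have "0 < ccoef \<alpha> (grid a T N) 1 k \<and>
      (\<forall>i. 2 \<le> i \<and> i \<le> k \<longrightarrow> ccoef \<alpha> (grid a T N) (i - 1) k < ccoef \<alpha> (grid a T N) i k)"
    if N: "0 < N" "(T - a) / real N < min (a / 60) (a * \<epsilon>0)" and k: "2 \<le> k" for N k
  proof -
    define \<tau> where "\<tau> = (T - a) / real N"
    have \<tau>: "0 < \<tau>" "\<tau> < a / 60" "\<tau> < a * \<epsilon>0"
      using N assms(1,2) by (simp_all add: \<tau>_def)
    interpret uniform_mesh a \<tau> k
      using assms(1) \<tau> by unfold_locales simp_all
    have "grid a T N = t"
      by (simp add: fun_eq_iff grid_def t_def flip: \<tau>_def)
    moreover have "window_ordered (1 - \<alpha>) (\<tau> / t (k - 1))"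
    proof (rule \<epsilon>0(2))
      show "0 < \<tau> / t (k - 1)"
        using tau_pos t_pos by simp
      have "\<tau> / t (k - 1) \<le> \<tau> / a"
        using t_ge a_pos tau_pos by (simp add: frac_le)
      also have "\<dots> < \<epsilon>0"
        using \<tau>(3) a_pos by (simp add: pos_divide_less_eq mult.commute)
      finally show "\<tau> / t (k - 1) < \<epsilon>0" .
    qed
    ultimately show ?thesis
      using ccoef_ordered[OF assms(3,4) k] by auto
  qed
  then show ?thesis
    using assms(1) \<epsilon>0(1) by (intro exI[of _ "min (a / 60) (a * \<epsilon>0)"]) auto
qed

end
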